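(* For every integer $n\ge3$, $$\int_{1+\frac1n}^{1+\frac{(\log n)^2}{n}}F_n(w)\,dw\le 2n\log\log n.$$
   Context: For $w>0$ and integer $n\ge1$ let $a_n(w)=\sum_{j=0}^n w^j$, $b_n(w)=\sum_{j=1}^n jw^j$, $c_n(w)=\sum_{j=0}^n j^2w^j$, and $$F_n(w)=\frac{1}{2\sqrt{w}}\sqrt{\frac{c_n(w)}{a_n(w)}}\sqrt{\frac{a_n(w)c_n(w)-b_n(w)^2}{w\,a_n(w)^2}}.$$ $\log$ is the natural logarithm. *)

theory Defs
  imports "HOL-Analysis.Analysis"
begin

definition a_n :: "nat \<Rightarrow> real \<Rightarrow> real" where
  "a_n n w = (\<Sum>j=0..n. w ^ j)"

definition b_n :: "nat \<Rightarrow> real \<Rightarrow> real" where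
  "b_n n w = (\<Sum>j=1..n. real j * w ^ j)"

definition c_n :: "nat \<Rightarrow> real \<Rightarrow> real" where
  "c_n n w = (\<Sum>j=0..n. (real j)^2 * w ^ j)"

definition F_n :: "nat \<Rightarrow> real \<Rightarrow> real" where
  "F_n n w = 1 / (2 * sqrt w) * sqrt (c_n n w / a_n n w)
     * sqrt ((a_n n w * c_n n w - (b_n n w)^2) / (w * (a_n n w)^2))"

end

theory Submission imports Defs begin

text \<open>
  For \<open>w > 1\<close> the quotient \<open>(a c - b\<^sup>2) / a\<^sup>2\<close> is the variance of \<open>j\<close> under the
  weights \<open>w\<^sup>j\<close>, hence at most the second moment of \<open>n - j\<close>. Reflecting \<open>j \<mapsto> n - j\<close>
  turns the weights into geometric ones with ratio \<open>q = 1/w < 1\<close>, for which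
  \<open>(1 - q)\<^sup>2 \<Sum> k\<^sup>2 q\<^sup>k \<le> 2 \<Sum> q\<^sup>k\<close>. Together with \<open>c \<le> n\<^sup>2 a\<close> this gives
  \<open>F\<^sub>n(w) \<le> n / (\<surd>2 (w - 1)) \<le> n / (w - 1)\<close>, whose integral over the given range is
  exactly \<open>n (ln ((ln n)\<^sup>2 / n) - ln (1 / n)) = 2 n ln ln n\<close>.
\<close>

lemma sum_power_ge_one: "0 \<le> q \<Longrightarrow> (1::real) \<le> (\<Sum>k=0..n. q ^ k)"
  by (induction n) (simp_all add: add_increasing2)

lemma one_minus_mult_sum_nat_mult_power:
  "(1 - q) * (\<Sum>k=0..n. real k * q ^ k) = (\<Sum>k=0..n. q ^ k) - 1 - real n * q ^ Suc n"
  for q :: real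
  by (induction n) (auto simp: algebra_simps)

lemma one_minus_mult_sum_nat_square_mult_power:
  "(1 - q) * (\<Sum>k=0..n. (real k)\<^sup>2 * q ^ k)
     = 2 * (\<Sum>k=0..n. real k * q ^ k) - ((\<Sum>k=0..n. q ^ k) - 1) - (real n)\<^sup>2 * q ^ Suc n"
  for q :: real
  by (induction n) (auto simp: algebra_simps power2_eq_square)

lemma sum_nat_square_mult_power_le:
  fixes q :: real
  assumes "0 \<le> q" "q \<le> 1"
  shows "(1 - q)\<^sup>2 * (\<Sum>k=0..n. (real k)\<^sup>2 * q ^ k) \<le> 2 * (\<Sum>k=0..n. q ^ k)"
proof -
  let ?S = "\<Sum>k=0..n. q ^ k" and ?U = "\<Sum>k=0..n. real k * q ^ k"
    and ?T = "\<Sum>k=0..n. (real k)\<^sup>2 * q ^ k"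
  have tail: "0 \<le> q ^ Suc n" using assms by simp
  have "(1 - q) * ?T \<le> 2 * ?U"
    using one_minus_mult_sum_nat_square_mult_power[of q n] sum_power_ge_one[OF assms(1), of n] tail
    by (smt (verit) mult_nonneg_nonneg zero_le_power2)
  moreover have "(1 - q) * ?U \<le> ?S"
    using one_minus_mult_sum_nat_mult_power[of q n] tail
    by (smt (verit) mult_nonneg_nonneg of_nat_0_le_iff)
  ultimately have "(1 - q) * ((1 - q) * ?T) \<le> (1 - q) * (2 * ?U)" "(1 - q) * (2 * ?U) \<le> 2 * ?S"
    using assms by (auto intro: mult_left_mono)
  then show ?thesis by (simp add: power2_eq_square mult.assoc)
qed

lemma sum_reflect_mult_power:
  fixes w :: real and f :: "nat \<Rightarrow> real"
  assumes "w \<noteq> 0"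
  shows "(\<Sum>j=0..n. f (n - j) * w ^ j) = w ^ n * (\<Sum>k=0..n. f k * (1 / w) ^ k)"
proof -
  have "(\<Sum>j=0..n. f (n - j) * w ^ j) = (\<Sum>k=0..n. f (n - (n + 0 - k)) * w ^ (n + 0 - k))"
    by (rule sum.atLeastAtMost_rev)
  also have "\<dots> = (\<Sum>k=0..n. w ^ n * (f k * (1 / w) ^ k))"
    using assms by (intro sum.cong) (auto simp: power_diff power_one_over)
  finally show ?thesis by (simp add: sum_distrib_left)
qed

lemma a_n_ge_one: "0 \<le> w \<Longrightarrow> 1 \<le> a_n n w"
  unfolding a_n_def by (rule sum_power_ge_one)

lemma c_n_le: "0 \<le> w \<Longrightarrow> c_n n w \<le> (real n)\<^sup>2 * a_n n w"
  unfolding c_n_def a_n_def sum_distrib_left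
  by (intro sum_mono mult_right_mono) auto

lemma a_n_mult_c_n_minus_b_n_square:
  "a_n n w * c_n n w - (b_n n w)\<^sup>2
     = a_n n w * (\<Sum>j=0..n. (real n - real j)\<^sup>2 * w ^ j) - (real n * a_n n w - b_n n w)\<^sup>2"
proof -
  have b: "b_n n w = (\<Sum>j=0..n. real j * w ^ j)"
    unfolding b_n_def by (simp add: sum.atLeast_Suc_atMost)
  have moment: "(\<Sum>j=0..n. (real n - real j)\<^sup>2 * w ^ j)
          = (real n)\<^sup>2 * a_n n w - 2 * real n * b_n n w + c_n n w"
    unfolding a_n_def b c_n_def
    by (simp add: sum_distrib_left sum_subtractf[symmetric] sum.distrib[symmetric]
        power2_eq_square algebra_simps)
  show ?thesis unfolding moment by (simp add: power2_eq_square algebra_simps)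
qed

lemma a_n_mult_c_n_minus_b_n_square_le:
  fixes w :: real
  assumes "w > 1"
  shows "(w - 1)\<^sup>2 * (a_n n w * c_n n w - (b_n n w)\<^sup>2) \<le> 2 * w\<^sup>2 * (a_n n w)\<^sup>2"
proof -
  define q where "q = 1 / w"
  define a where "a = a_n n w"
  define S where "S = (\<Sum>k=0..n. q ^ k)"
  define T where "T = (\<Sum>k=0..n. (real k)\<^sup>2 * q ^ k)"
  have q: "0 \<le> q" "q \<le> 1" using assms by (auto simp: q_def)
  have a_eq: "a = w ^ n * S"
    using sum_reflect_mult_power[of w "\<lambda>_. 1" n] assms
    by (simp add: a_def a_n_def S_def q_def)
  have moment_eq: "(\<Sum>j=0..n. (real n - real j)\<^sup>2 * w ^ j) = w ^ n * T"
  proof -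
    have "(\<Sum>j=0..n. (real n - real j)\<^sup>2 * w ^ j) = (\<Sum>j=0..n. (real (n - j))\<^sup>2 * w ^ j)"
      by (intro sum.cong) (auto simp: of_nat_diff)
    also have "\<dots> = w ^ n * T"
      using sum_reflect_mult_power[of w "\<lambda>k. (real k)\<^sup>2" n] assms by (simp add: T_def q_def)
    finally show ?thesis .
  qed
  have a1: "1 \<le> a" using a_n_ge_one[of w n] assms by (simp add: a_def)
  have "a_n n w * c_n n w - (b_n n w)\<^sup>2 \<le> a * (w ^ n * T)"
    using a_n_mult_c_n_minus_b_n_square[of n w] by (simp add: moment_eq a_def)
  then have "(w - 1)\<^sup>2 * (a_n n w * c_n n w - (b_n n w)\<^sup>2) \<le> (w - 1)\<^sup>2 * (a * (w ^ n * T))"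
    by (intro mult_left_mono) auto
  also have "\<dots> = w\<^sup>2 * a * w ^ n * ((1 - q)\<^sup>2 * T)"
    using assms by (simp add: q_def field_simps power2_eq_square)
  also have "\<dots> \<le> w\<^sup>2 * a * w ^ n * (2 * S)"
    using sum_nat_square_mult_power_le[OF q, of n] a1 assms
    by (intro mult_left_mono) (auto simp: S_def T_def)
  also have "\<dots> = 2 * w\<^sup>2 * (a_n n w)\<^sup>2"
    by (simp add: a_def[symmetric] a_eq power2_eq_square algebra_simps)
  finally show ?thesis .
qed

lemma F_n_le:
  fixes w :: real
  assumes "w > 1"
  shows "F_n n w \<le> real n / (w - 1)"
proof -
  define a where "a = a_n n w"
  define V where "V = a_n n w * c_n n w - (b_n n w)\<^sup>2"
  have a1: "1 \<le> a" using a_n_ge_one[of w n] assms by (simp add: a_def)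
  have c_nonneg: "0 \<le> c_n n w" unfolding c_n_def using assms by (intro sum_nonneg) auto
  have mean_le: "sqrt (c_n n w / a) \<le> real n"
  proof -
    have "c_n n w / a \<le> (real n)\<^sup>2"
      using c_n_le[of w n] a1 assms by (simp add: a_def divide_le_eq)
    then show ?thesis using real_sqrt_le_mono by fastforce
  qed
  have "V / (w * a\<^sup>2) \<le> 2 * w / (w - 1)\<^sup>2"
    using a_n_mult_c_n_minus_b_n_square_le[OF assms, of n] a1 assms
    by (simp add: V_def a_def divide_simps power2_eq_square mult_ac)
  then have "sqrt (V / (w * a\<^sup>2)) \<le> sqrt (2 * w / (w - 1)\<^sup>2)"
    by (rule real_sqrt_le_mono)
  also have "\<dots> = sqrt 2 * sqrt w / (w - 1)"
    using assms by (simp add: real_sqrt_mult real_sqrt_divide)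
  finally have var_le: "sqrt (V / (w * a\<^sup>2)) \<le> sqrt 2 * sqrt w / (w - 1)" .
  have "F_n n w = 1 / (2 * sqrt w) * sqrt (c_n n w / a) * sqrt (V / (w * a\<^sup>2))"
    by (simp add: F_n_def a_def V_def)
  also have "\<dots> \<le> 1 / (2 * sqrt w) * sqrt (c_n n w / a) * (sqrt 2 * sqrt w / (w - 1))"
    using var_le c_nonneg a1 assms by (intro mult_left_mono) auto
  also have "\<dots> \<le> 1 / (2 * sqrt w) * real n * (sqrt 2 * sqrt w / (w - 1))"
    using mean_le assms by (intro mult_right_mono mult_left_mono) auto
  also have "\<dots> = real n * sqrt 2 / 2 / (w - 1)"
    using assms by (simp add: field_simps)
  also have "\<dots> \<le> real n / (w - 1)"
  proof -
    have "sqrt 2 \<le> 2" using real_sqrt_le_mono[of 2 4] by (simp add: real_sqrt_four)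
    then have "real n * sqrt 2 / 2 \<le> real n" by (simp add: mult_left_mono)
    then show ?thesis using assms by (intro divide_right_mono) auto
  qed
  finally show ?thesis .
qed

lemma continuous_on_F_n:
  fixes lo hi :: real
  assumes "0 < lo"
  shows "continuous_on {lo..hi} (F_n n)"
proof -
  have "\<And>w. w \<in> {lo..hi} \<Longrightarrow> a_n n w \<noteq> 0"
    using a_n_ge_one assms by (metis atLeastAtMost_iff less_le_trans not_one_le_zero less_imp_le)
  then show ?thesis
    unfolding F_n_def[abs_def] a_n_def b_n_def c_n_def
    using assms by (intro continuous_intros) (auto simp: a_n_def)
qed

lemma has_integral_divide_minus_one:
  fixes lo hi C :: real
  assumes "1 < lo" "lo \<le> hi"
  shows "((\<lambda>x. C / (x - 1)) has_integral C * (ln (hi - 1) - ln (lo - 1))) {lo..hi}"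
proof -
  have "((\<lambda>x. C * ln (x - 1)) has_vector_derivative C / (x - 1)) (at x within {lo..hi})"
    if "x \<in> {lo..hi}" for x
  proof -
    have "((\<lambda>x. C * ln (x - 1)) has_real_derivative C * (1 / (x - 1))) (at x within {lo..hi})"
      using that assms by (auto intro!: derivative_eq_intros)
    then show ?thesis by (simp add: has_real_derivative_iff_has_vector_derivative)
  qed
  from fundamental_theorem_of_calculus[OF assms(2) this] show ?thesis
    by (simp add: algebra_simps)
qed

theorem lemma3p5:
  fixes n :: nat
  assumes "n \<ge> 3"
  shows "integral {1 + 1 / real n .. 1 + (ln (real n))^2 / real n} (F_n n)
           \<le> 2 * real n * ln (ln (real n))"
proof -
  define lo where "lo = 1 + 1 / real n"
  define hi where "hi = 1 + (ln (real n))\<^sup>2 / real n"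
  have n3: "3 \<le> real n" using assms by simp
  have ln_ge_1: "1 \<le> ln (real n)"
    using exp_le n3 by (subst ln_ge_iff) auto
  have lo1: "1 < lo" unfolding lo_def using n3 by simp
  have lo_le_hi: "lo \<le> hi"
    unfolding lo_def hi_def using ln_ge_1 n3 by (simp add: divide_right_mono one_le_power)
  have bound: "((\<lambda>x. real n / (x - 1)) has_integral 2 * real n * ln (ln (real n))) {lo..hi}"
    using has_integral_divide_minus_one[OF lo1 lo_le_hi, of "real n"] ln_ge_1 n3
    by (simp add: lo_def hi_def ln_div ln_realpow mult_ac)
  have "F_n n integrable_on {lo..hi}"
    using lo1 by (intro integrable_continuous_interval continuous_on_F_n) simp
  then have "integral {lo..hi} (F_n n) \<le> integral {lo..hi} (\<lambda>x. real n / (x - 1))"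
    using bound lo1 by (intro integral_le) (auto intro: F_n_le has_integral_integrable)
  also have "\<dots> = 2 * real n * ln (ln (real n))"
    using bound by (rule integral_unique)
  finally show ?thesis by (simp add: lo_def hi_def)
qed

end
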